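(* For each $n\in\{3,4,5,6,7\}$, the N00N state $Q=\frac{1}{\sqrt2}\cdot\frac{1}{\sqrt{n!}}\big((a^\dagger_1)^n+(a^\dagger_2)^n\big)$ (i.e. $(|n,0\rangle+|0,n\rangle)/\sqrt2$) cannot be generated by vacuum heralding from the $(n-1)$-mode input $|2,1,\dots,1\rangle$: there is no complex $(n-1)\times(n-1)$ matrix $A$ and no $\gamma\in\mathbb{C}$ such that $\gamma G=Q$, where $G$ is obtained with input occupation numbers $(n_1,\dots,n_{n-1})=(2,1,\dots,1)$ and heralding pattern $(0,\dots,0)$ on the last $n-3$ modes.
   Context: Heralded linear-optical state generation model. States with a fixed photon number are homogeneous polynomials in commuting variables $a^\dagger_1,\dots,a^\dagger_N$ applied to the vacuum. Given $N$ modes, an arbitrary complex $N\times N$ matrix $A$ (not required to be unitary), and a Fock input $\prod_{i=1}^N\frac{1}{\sqrt{n_i!}}(a^\dagger_{i,\mathrm{in}})^{n_i}|0\rangle$, the output is $F|0\rangle$ with $F=\prod_{i=1}^N\frac{1}{\sqrt{n_i!}}\big(\sum_{j=1}^N A_{i,j}a^\dagger_j\big)^{n_i}$. Heralding the last $M$ modes on the pattern $(m_1,\dots,m_M)$, $m=\sum_jm_j$, gives $G=\frac{1}{\prod_jm_j!}\,\frac{\partial^{m}F}{\partial(a^\dagger_{N-M+1})^{m_1}\cdots\partial(a^\dagger_N)^{m_M}}\Big|_{a^\dagger_{N-M+1}=\cdots=a^\dagger_N=0}$; for the all-zero (vacuum) pattern this is just $F$ with $a^\dagger_{N-M+1},\dots,a^\dagger_N$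 set to $0$. $G$ and $Q$ are compared as polynomials in $a^\dagger_1,\dots,a^\dagger_{N-M}$. *)

theory Defs
  imports Complex_Main
begin

text \<open>Polynomials in the commuting creation operators are represented by their
  polynomial functions on complex points x :: nat \<Rightarrow> complex (mode j is
  the variable x j, modes indexed 0..N-1). Over the infinite field of complex
  numbers, equality of polynomials coincides with equality of these functions.\<close>

definition lo_output ::
  "nat \<Rightarrow> (nat \<Rightarrow> nat \<Rightarrow> complex) \<Rightarrow> (nat \<Rightarrow> nat) \<Rightarrow> (nat \<Rightarrow> complex) \<Rightarrow> complex" where
  "lo_output N A nn x =
     (\<Prod>i<N. complex_of_real (1 / sqrt (fact (nn i))) * (\<Sum>j<N. A i j * x j) ^ (nn i))"

definition vacuum_herald ::
  "nat \<Rightarrow> nat \<Rightarrow> (nat \<Rightarrow> nat \<Rightarrow> complex) \<Rightarrow> (nat \<Rightarrow> nat) \<Rightarrow> (nat \<Rightarrow> complex) \<Rightarrow> complex" where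
  "vacuum_herald N M A nn x = lo_output N A nn (\<lambda>j. if j < N - M then x j else 0)"

definition noon_state :: "nat \<Rightarrow> (nat \<Rightarrow> complex) \<Rightarrow> complex" where
  "noon_state n x = complex_of_real (1 / sqrt 2) * complex_of_real (1 / sqrt (fact n))
                    * (x 0 ^ n + x 1 ^ n)"

definition input_211 :: "nat \<Rightarrow> nat" where
  "input_211 i = (if i = 0 then 2 else 1)"

end

theory Submission
  imports Defs
begin

text \<open>Heralding the vacuum on all modes but the first two leaves a polynomial in x 0, x 1
  that contains the square of the linear form fed by the two-photon input mode. But
  x0^n + x1^n has no repeated linear factor: on the line where that form vanishes it would
  have a double root, so both it and its derivative n z^(n-1) would vanish there. This
  forces both coefficients of the form to be zero, and then the product vanishes identically.\<close>

lemma DERIV_zero_of_square_factor: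
  fixes f g :: "'a::real_normed_field \<Rightarrow> 'a"
  assumes deriv: "(f has_field_derivative D) (at z)"
    and factor: "\<And>t. f (z + t) - f z = t^2 * g t"
    and cont: "isCont g 0"
  shows "D = 0"
proof -
  have "((\<lambda>t. t * g t) \<longlongrightarrow> 0 * g 0) (at 0)"
    using cont by (intro tendsto_intros) (auto simp: isCont_def)
  moreover have "\<forall>\<^sub>F t in at 0. t * g t = (f (z + t) - f z) / t"
    by (auto simp: eventually_at_filter factor power2_eq_square)
  ultimately have "((\<lambda>t. (f (z + t) - f z) / t) \<longlongrightarrow> 0) (at 0)"
    by (simp add: tendsto_cong)
  moreover have "((\<lambda>t. (f (z + t) - f z) / t) \<longlongrightarrow> D) (at 0)"
    using deriv by (simp add: DERIV_def)
  ultimately show "D = 0"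
    by (rule tendsto_unique[OF at_neq_bot, symmetric])
qed

lemma power_sum_square_factor_coeff_eq_0:
  fixes a b :: complex and R :: "complex \<Rightarrow> complex \<Rightarrow> complex"
  assumes factor: "\<And>x0 x1. (a*x0 + b*x1)^2 * R x0 x1 = x0^n + x1^n"
    and cont: "\<And>y z. isCont (\<lambda>t. R t y) z"
  shows "b = 0"
proof -
  have root: "b^n + (-a)^n = 0"
    using factor[of b "-a"] by (simp add: algebra_simps)
  have "(b + t)^n - b^n = t^2 * (a^2 * R (b + t) (-a))" for t
  proof -
    have "a*(b + t) + b*(-a) = a*t" by (simp add: algebra_simps)
    then show ?thesis
      using factor[of "b + t" "-a"] root by (simp add: algebra_simps power_mult_distrib)
  qed
  moreover have "isCont (\<lambda>t. a^2 * R (b + t) (-a)) 0"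
  proof -
    have "isCont (\<lambda>t. R (b + t) (-a)) 0"
      by (rule isCont_o2[OF _ cont]) (intro continuous_intros)
    then show ?thesis
      by (intro continuous_intros)
  qed
  moreover have "((\<lambda>x. x^n) has_field_derivative of_nat n * b^(n - 1)) (at b)"
    using DERIV_power[OF DERIV_ident] by simp
  ultimately have "of_nat n * b^(n - 1) = 0"
    by (rule DERIV_zero_of_square_factor[rotated])
  then show "b = 0"
    using root by (cases n) (auto simp del: of_nat_Suc)
qed

theorem power_sum_no_square_linear_factor:
  fixes R :: "complex \<Rightarrow> complex \<Rightarrow> complex"
  assumes cont1: "\<And>y z. isCont (\<lambda>t. R t y) z"
    and cont2: "\<And>y z. isCont (\<lambda>t. R y t) z"
  shows "\<not> (\<forall>x0 x1. (a*x0 + b*x1)^2 * R x0 x1 = x0^n + x1^n)"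
proof
  assume factor: "\<forall>x0 x1. (a*x0 + b*x1)^2 * R x0 x1 = x0^n + x1^n"
  then have "b = 0"
    by (intro power_sum_square_factor_coeff_eq_0[OF _ cont1]) blast
  moreover have "a = 0"
  proof (rule power_sum_square_factor_coeff_eq_0[of b a "\<lambda>x0 x1. R x1 x0"])
    show "(b*x0 + a*x1)^2 * R x1 x0 = x0^n + x1^n" for x0 x1
      using factor by (metis add.commute)
  qed (fact cont2)
  ultimately show False
    using factor[rule_format, of 1 0] by (simp add: power_0_left split: if_splits)
qed

lemma vacuum_herald_input_211:
  assumes "N \<ge> 2"
  shows "vacuum_herald N (N - 2) A input_211 x = complex_of_real (1 / sqrt 2)
           * (A 0 0 * x 0 + A 0 1 * x 1)^2 * (\<Prod>i\<in>{1..<N}. A i 0 * x 0 + A i 1 * x 1)"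
proof -
  have heralded_form: "(\<Sum>j<N. A i j * (if j < N - (N - 2) then x j else 0))
      = A i 0 * x 0 + A i 1 * x 1" for i
  proof -
    have "(\<Sum>j<N. A i j * (if j < N - (N - 2) then x j else 0))
        = (\<Sum>j\<in>{..<N} \<inter> {j. j < 2}. A i j * x j)"
      using assms by (simp add: sum.inter_restrict if_distrib cong: if_cong)
    also have "{..<N} \<inter> {j. j < 2} = {0, 1}"
      using assms by auto
    finally show ?thesis
      by simp
  qed
  have "{..<N} = insert 0 {1..<N}"
    using assms by auto
  then show ?thesis
    unfolding vacuum_herald_def lo_output_def heralded_form by (simp add: input_211_def)
qed

theorem mainTheorem4:
  fixes n :: nat
  assumes "n \<in> {3,4,5,6,7}"
  shows "\<not> (\<exists>(A :: nat \<Rightarrow> nat \<Rightarrow> complex) (\<gamma> :: complex).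
            \<forall>x :: nat \<Rightarrow> complex.
              \<gamma> * vacuum_herald (n - 1) (n - 3) A input_211 x = noon_state n x)"
proof
  assume "\<exists>A \<gamma>. \<forall>x. \<gamma> * vacuum_herald (n - 1) (n - 3) A input_211 x = noon_state n x"
  then obtain A \<gamma> where generates:
    "\<And>x. \<gamma> * vacuum_herald (n - 1) (n - 3) A input_211 x = noon_state n x"
    by blast
  have "n - 1 \<ge> 2" and "n - 3 = n - 1 - 2"
    using assms by auto
  define R where "R x0 x1 = \<gamma> * sqrt (fact n) * (\<Prod>i\<in>{1..<n - 1}. A i 0 * x0 + A i 1 * x1)"
    for x0 x1
  have "(A 0 0 * x0 + A 0 1 * x1)^2 * R x0 x1 = x0^n + x1^n" for x0 x1
    using generates[of "\<lambda>j. if j = 0 then x0 else x1"]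
    unfolding \<open>n - 3 = n - 1 - 2\<close> vacuum_herald_input_211[OF \<open>n - 1 \<ge> 2\<close>]
      noon_state_def R_def
    by (simp add: field_simps)
  moreover have "isCont (\<lambda>t. R t y) z" "isCont (\<lambda>t. R y t) z" for y z
    unfolding R_def by (intro continuous_intros)+
  ultimately show False
    using power_sum_no_square_linear_factor by blast
qed

end
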